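(* Let $A\in\mathbb{R}^{nm\times nm}$, let $x=\operatorname{vec}(X)\in S^{nm-1}\cap\mathcal{M}_r$ with thin SVD $X=USV^\top$ ($U^\top U=I_r$, $V^\top V=I_r$, $S$ diagonal positive), and set $\mathfrak{R}(x)=x^\top Ax$, $C=A-\mathfrak{R}(x)I_{nm}$. Let $U_\xi\in\mathbb{R}^{n\times r}$, $V_\xi\in\mathbb{R}^{m\times r}$, $S_\xi\in\mathbb{R}^{r\times r}$ and $\xi=\operatorname{vec}(U_\xi V^\top+UV_\xi^\top+US_\xi V^\top)$, and put \[ \tau_\xi=\begin{bmatrix}\operatorname{vec}(U_\xi)\\ \operatorname{vec}(V_\xi^\top)\\ \operatorname{vec}(S_\xi)\end{bmatrix}\in\mathbb{R}^{nr+mr+r^2}. \] Then the following are equivalent: (a) $U^\top U_\xi=0$, $V^\top V_\xi=0$, $\operatorname{vec}(S_\xi)^\top\operatorname{vec}(S)=0$, and \[ (I-xx^\top)\,\mathrm{P}_{T_X\mathcal{M}_r}\,C\,\mathrm{P}_{T_X\mathcal{M}_r}\,(I-xx^\top)\,\xi=-\mathrm{P}_{T_X\mathcal{M}_r}(I-xx^\top)Ax; \] (b) $B^\top\tau_\xi=0$ and \[ (I-BB^\top)\,C_{\mathrm{loc}}\,(I-BB^\top)\,\tau_\xi=-(I-BB^\top)\,g, \] where \[ B=\begin{bmatrix} I_r\otimes U&0&0\\ 0&V\otimes I_r&0\\ 0&0&\operatorname{vec}(S)\end{bmatrix},\quad C_{\mathrm{loc}}=\begin{bmatrix}C_{v,v}&C_{v,u}&C_{v,vu}\\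 C_{u,v}&C_{u,u}&C_{u,vu}\\ C_{vu,v}&C_{vu,u}&C_{vu,vu}\end{bmatrix},\quad g=\begin{bmatrix}A_{v,v}\operatorname{vec}(US)\\ A_{u,u}\operatorname{vec}(SV^\top)\\ A_{vu,vu}\operatorname{vec}(S)\end{bmatrix}. \]
   Context: $\operatorname{vec}$ is columnwise reshaping, so $\operatorname{vec}(ABC)=(C^\top\otimes A)\operatorname{vec}(B)$. $\mathcal{M}_r$ is the manifold of (vectorized) $n\times m$ matrices of rank exactly $r$, $S^{nm-1}$ the unit sphere in $\mathbb{R}^{nm}$, and $\mathrm{P}_{T_X\mathcal{M}_r}=VV^\top\otimes UU^\top+VV^\top\otimes(I_n-UU^\top)+(I_m-VV^\top)\otimes UU^\top$ is the orthogonal projection onto the tangent space of $\mathcal{M}_r$ at $X$. Define $E_v=V\otimes I_n\in\mathbb{R}^{nm\times nr}$, $E_u=I_m\otimes U\in\mathbb{R}^{nm\times mr}$, $E_{vu}=V\otimes U\in\mathbb{R}^{nm\times r^2}$, and for any $M\in\mathbb{R}^{nm\times nm}$ and $a,b\in\{v,u,vu\}$ set $M_{a,b}=E_a^\top M E_b$ (e.g. $M_{v,v}=(V^\top\otimes I_n)M(V\otimes I_n)$, $M_{v,u}=(V^\top\otimes I_n)M(I_m\otimes U)$, $M_{v,vu}=(V^\top\otimes I_n)M(V\otimes U)$, $M_{u,u}=(I_m\otimes U^\top)M(I_m\otimes U)$, $M_{vu,vu}=(V^\top\otimes U^\top)M(V\otimes U)$). Note $\|\operatorname{vec}(S)\|=\|x\|=1$,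 so $B$ has orthonormal columns. *)

theory Defs
  imports "Jordan_Normal_Form.Matrix"
begin

text \<open>Column-wise vectorization: an n x m matrix becomes an (n*m) x 1 column matrix,
  entry k = i + n*j holds X(i,j).\<close>
definition vecm :: "real mat \<Rightarrow> real mat" where
  "vecm X = mat (dim_row X * dim_col X) 1 (\<lambda>(k,_). X $$ (k mod dim_row X, k div dim_row X))"

text \<open>Kronecker product (standard convention, so vec(ABC) = (C^T kron A) vec(B)).\<close>
definition kron :: "real mat \<Rightarrow> real mat \<Rightarrow> real mat" where
  "kron A B = mat (dim_row A * dim_row B) (dim_col A * dim_col B)
     (\<lambda>(i,j). A $$ (i div dim_row B, j div dim_col B) * B $$ (i mod dim_row B, j mod dim_col B))"

definition vstack :: "real mat \<Rightarrow> real mat \<Rightarrow> real mat" where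
  "vstack a b = four_block_mat a (0\<^sub>m (dim_row a) 0) b (0\<^sub>m (dim_row b) 0)"

definition hstack :: "real mat \<Rightarrow> real mat \<Rightarrow> real mat" where
  "hstack a b = four_block_mat a b (0\<^sub>m 0 (dim_col a)) (0\<^sub>m 0 (dim_col b))"

definition block3 :: "real mat \<Rightarrow> real mat \<Rightarrow> real mat \<Rightarrow> real mat \<Rightarrow> real mat \<Rightarrow> real mat
    \<Rightarrow> real mat \<Rightarrow> real mat \<Rightarrow> real mat \<Rightarrow> real mat" where
  "block3 M11 M12 M13 M21 M22 M23 M31 M32 M33 =
     four_block_mat (four_block_mat M11 M12 M21 M22) (vstack M13 M23) (hstack M31 M32) M33"

definition stack3 :: "real mat \<Rightarrow> real mat \<Rightarrow> real mat \<Rightarrow> real mat" where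
  "stack3 a b c = vstack (vstack a b) c"

definition tangent_proj :: "nat \<Rightarrow> nat \<Rightarrow> real mat \<Rightarrow> real mat \<Rightarrow> real mat" where
  "tangent_proj n m U V =
     kron (V * transpose_mat V) (U * transpose_mat U)
   + kron (V * transpose_mat V) (1\<^sub>m n - U * transpose_mat U)
   + kron (1\<^sub>m m - V * transpose_mat V) (U * transpose_mat U)"

text \<open>Local blocks M_{a,b} = E_a^T M E_b with E_v = V kron I_n, E_u = I_m kron U, E_vu = V kron U.\<close>
definition Ev :: "nat \<Rightarrow> real mat \<Rightarrow> real mat" where "Ev n V = kron V (1\<^sub>m n)"
definition Eu :: "nat \<Rightarrow> real mat \<Rightarrow> real mat" where "Eu m U = kron (1\<^sub>m m) U"
definition Evu :: "real mat \<Rightarrow> real mat \<Rightarrow> real mat" where "Evu U V = kron V U"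

definition loc_block :: "real mat \<Rightarrow> real mat \<Rightarrow> real mat \<Rightarrow> real mat" where
  "loc_block Ea M Eb = transpose_mat Ea * M * Eb"

end

theory Submission
  imports Defs
begin

text \<open>Under the gauge conditions, which say exactly that \<open>B\<^sup>T \<tau> = 0\<close>, the vector \<open>\<xi>\<close> is tangent
  and orthogonal to \<open>x\<close>, and \<open>\<tau>\<close> is fixed by \<open>I - B B\<^sup>T\<close>. Both equations then state that the
  single vector \<open>w = C \<xi> + A x\<close> has no normal component, once in ambient coordinates
  (\<open>(I - x x\<^sup>T) P w = 0\<close>) and once in the local coordinates
  \<open>(E\<^sub>v\<^sup>T w, E\<^sub>u\<^sup>T w, E\<^sub>v\<^sub>u\<^sup>T w)\<close>. Writing \<open>w = vec W\<close>, each of these is equivalent to the three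
  matrix identities \<open>W V = U U\<^sup>T W V\<close>, \<open>U\<^sup>T W = U\<^sup>T W V V\<^sup>T\<close> and \<open>U\<^sup>T W V = \<langle>S, U\<^sup>T W V\<rangle> S\<close>.\<close>

lemma mult_assoc_dims:
  "dim_col A = dim_row B \<Longrightarrow> dim_col B = dim_row C \<Longrightarrow> (A :: 'a :: semiring_0 mat) * B * C = A * (B * C)"
  by (rule assoc_mult_mat[of A "dim_row A" "dim_col A" B "dim_col B" C "dim_col C"]) auto

lemma mult_add_distrib_dims:
  "dim_col A = dim_row B \<Longrightarrow> dim_row B = dim_row C \<Longrightarrow> dim_col B = dim_col C \<Longrightarrow>
   (A :: 'a :: semiring_0 mat) * (B + C) = A * B + A * C"
  by (rule mult_add_distrib_mat[of A "dim_row A" "dim_col A" B "dim_col B"]) auto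

lemma add_mult_distrib_dims:
  "dim_row A = dim_row B \<Longrightarrow> dim_col A = dim_col B \<Longrightarrow> dim_col B = dim_row C \<Longrightarrow>
   ((A :: 'a :: semiring_0 mat) + B) * C = A * C + B * C"
  by (rule add_mult_distrib_mat[of A "dim_row A" "dim_col A" B C "dim_col C"]) auto

lemma mult_minus_distrib_dims:
  "dim_col A = dim_row B \<Longrightarrow> dim_row B = dim_row C \<Longrightarrow> dim_col B = dim_col C \<Longrightarrow>
   (A :: 'a :: ring mat) * (B - C) = A * B - A * C"
  by (rule mult_minus_distrib_mat[of A "dim_row A" "dim_col A" B "dim_col B"]) auto

lemma minus_mult_distrib_dims:
  "dim_row A = dim_row B \<Longrightarrow> dim_col A = dim_col B \<Longrightarrow> dim_col B = dim_row C \<Longrightarrow>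
   ((A :: 'a :: ring mat) - B) * C = A * C - B * C"
  by (rule minus_mult_distrib_mat[of A "dim_row A" "dim_col A" B C "dim_col C"]) auto

lemma mult_smult_distrib_dims:
  "dim_col A = dim_row B \<Longrightarrow> (A :: 'a :: comm_ring mat) * (k \<cdot>\<^sub>m B) = k \<cdot>\<^sub>m (A * B)"
  by (rule mult_smult_distrib[of A "dim_row A" "dim_col A" B "dim_col B"]) auto

lemma mult_smult_assoc_dims:
  "dim_col A = dim_row B \<Longrightarrow> (k \<cdot>\<^sub>m (A :: 'a :: comm_ring mat)) * B = k \<cdot>\<^sub>m (A * B)"
  by (rule mult_smult_assoc_mat[of A "dim_row A" "dim_col A" B "dim_col B"]) auto

lemmas mult_dims_simps = mult_assoc_dims mult_add_distrib_dims add_mult_distrib_dims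
  mult_minus_distrib_dims minus_mult_distrib_dims mult_smult_distrib_dims mult_smult_assoc_dims

lemma minus_mat_eq_0_iff:
  "X \<in> carrier_mat a b \<Longrightarrow> Y \<in> carrier_mat a b \<Longrightarrow> X - Y = 0\<^sub>m a b \<longleftrightarrow> X = (Y :: 'a :: ab_group_add mat)"
  by (auto simp: mat_eq_iff)

lemma eq_uminus_mat_iff_add_eq_0:
  "X \<in> carrier_mat a b \<Longrightarrow> Y \<in> carrier_mat a b \<Longrightarrow> X = - Y \<longleftrightarrow> X + Y = 0\<^sub>m a (b :: nat)"
  for X Y :: "'a :: ab_group_add mat"
  by (auto simp: mat_eq_iff add_eq_0_iff)

lemma transpose_mat_eq_0_iff:
  "M \<in> carrier_mat a b \<Longrightarrow> transpose_mat M = 0\<^sub>m b a \<longleftrightarrow> M = 0\<^sub>m a b"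
  by (metis transpose_transpose zero_transpose_mat)

lemma mult_mat_1x1:
  fixes M :: "'a :: comm_semiring_0 mat"
  assumes "M \<in> carrier_mat k 1" and "\<sigma> \<in> carrier_mat 1 1"
  shows "M * \<sigma> = (\<sigma> $$ (0,0)) \<cdot>\<^sub>m M"
  using assms by (auto simp: mat_eq_iff scalar_prod_def mult.commute)

lemma minus_mat_self [simp]: "(X :: 'a :: ab_group_add mat) - X = 0\<^sub>m (dim_row X) (dim_col X)"
  by (rule eq_matI) auto

lemma zero_mat_dims_simps [simp]:
  fixes X :: "'a :: ab_group_add mat"
  assumes "dim_row X = a" "dim_col X = b"
  shows "X + 0\<^sub>m a b = X" "0\<^sub>m a b + X = X" "X - 0\<^sub>m a b = X"
  using assms by (auto intro!: eq_matI)

lemma add_minus_cancel_dims [simp]: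
  fixes A B :: "'a :: ab_group_add mat"
  assumes "dim_row A = dim_row B" "dim_col A = dim_col B"
  shows "A + (B - A) = B" "(B - A) + A = B"
  using assms by (auto intro!: eq_matI)

lemma one_minus_outer_mult:
  fixes B v :: "'a :: comm_ring_1 mat"
  assumes "B \<in> carrier_mat k p" "v \<in> carrier_mat k d"
  shows "(1\<^sub>m k - B * transpose_mat B) * v = v - B * (transpose_mat B * v)"
  using assms by (simp add: minus_mult_distrib_mat[of _ k k] assoc_mult_mat[of B k p _ k v d])

lemma proj_commute_compl_outer:
  fixes P x v :: "'a :: comm_ring_1 mat"
  assumes P: "P \<in> carrier_mat k k" "transpose_mat P = P" and x: "x \<in> carrier_mat k 1" "P * x = x"
    and v: "v \<in> carrier_mat k d"
  shows "P * ((1\<^sub>m k - x * transpose_mat x) * v) = (1\<^sub>m k - x * transpose_mat x) * (P * v)"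
proof -
  have xP: "transpose_mat x * P = transpose_mat x"
    using transpose_mult[of "transpose_mat P" k k x 1] P x by simp
  have xv: "transpose_mat x * v \<in> carrier_mat 1 d" using x v by auto
  have "P * ((1\<^sub>m k - x * transpose_mat x) * v) = P * v - P * (x * (transpose_mat x * v))"
    using P x v by (simp add: one_minus_outer_mult mult_minus_distrib_mat[of P k k _ d])
  also have "P * (x * (transpose_mat x * v)) = x * (transpose_mat x * (P * v))"
    using P x v xv xP
    by (simp add: assoc_mult_mat[of P k k x 1 _ d, symmetric] assoc_mult_mat[of "transpose_mat x" 1 k P k v d, symmetric])
  also have "P * v - x * (transpose_mat x * (P * v)) = (1\<^sub>m k - x * transpose_mat x) * (P * v)"
    using P x v by (simp add: one_minus_outer_mult[of x k 1 "P * v" d])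
  finally show ?thesis .
qed

lemma sandwich_eq_uminus_iff:
  fixes P Q C A \<xi> x :: "'a :: comm_ring_1 mat"
  assumes "P \<in> carrier_mat N N" "Q \<in> carrier_mat N N" "C \<in> carrier_mat N N" "A \<in> carrier_mat N N"
    and \<xi>: "\<xi> \<in> carrier_mat N 1" "P * \<xi> = \<xi>" "Q * \<xi> = \<xi>" and "x \<in> carrier_mat N 1"
    and comm: "P * (Q * (A * x)) = Q * (P * (A * x))"
  shows "Q * P * C * P * Q * \<xi> = - (P * Q * A * x) \<longleftrightarrow> Q * (P * (C * \<xi> + A * x)) = 0\<^sub>m N 1"
proof -
  have [simp]: "dim_row P = N" "dim_col P = N" "dim_row Q = N" "dim_col Q = N" "dim_row C = N"
    "dim_col C = N" "dim_row A = N" "dim_col A = N" "dim_row \<xi> = N" "dim_row x = N"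
    using assms by auto
  have "Q * P * C * P * Q * \<xi> = Q * (P * (C * \<xi>))" and "P * Q * A * x = Q * (P * (A * x))"
    using \<xi> comm by (simp_all add: mult_assoc_dims)
  moreover have "Q * (P * (C * \<xi> + A * x)) = Q * (P * (C * \<xi>)) + Q * (P * (A * x))"
    using assms by (simp add: mult_add_distrib_mat[of _ N N _ 1])
  ultimately show ?thesis
    using assms by (simp add: eq_uminus_mat_iff_add_eq_0[of _ N 1])
qed

lemma proj_sandwich_eq_uminus_iff:
  fixes P M \<tau> g :: "'a :: comm_ring_1 mat"
  assumes "P \<in> carrier_mat K K" "M \<in> carrier_mat K K" "\<tau> \<in> carrier_mat K 1" "g \<in> carrier_mat K 1"
    and "P * \<tau> = \<tau>"
  shows "P * M * P * \<tau> = - (P * g) \<longleftrightarrow> P * (M * \<tau> + g) = 0\<^sub>m K 1"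
proof -
  have "P * M * P * \<tau> = P * (M * \<tau>)"
    using assms by (simp add: assoc_mult_mat[of _ K K _ K _ 1])
  moreover have "P * (M * \<tau> + g) = P * (M * \<tau>) + P * g"
    using assms by (simp add: mult_add_distrib_mat[of _ K K _ 1])
  ultimately show ?thesis
    using assms by (simp add: eq_uminus_mat_iff_add_eq_0[of _ K 1])
qed

section \<open>Vectorisation and Kronecker products\<close>

lemma sum_lessThan_mult_mod_div:
  fixes q :: nat and f :: "nat \<Rightarrow> nat \<Rightarrow> 'a :: comm_monoid_add"
  shows "(\<Sum>k<s*q. f (k mod q) (k div q)) = (\<Sum>b<s. \<Sum>a<q. f a b)"
proof (induction s)
  case (Suc s)
  have "{..<Suc s * q} = {..<s*q} \<union> {s*q..<s*q+q}" by auto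
  then have "(\<Sum>k<Suc s*q. f (k mod q) (k div q))
      = (\<Sum>k<s*q. f (k mod q) (k div q)) + (\<Sum>k\<in>{s*q..<s*q+q}. f (k mod q) (k div q))"
    by (simp add: sum.union_disjoint ivl_disj_int)
  also have "(\<Sum>k\<in>{s*q..<s*q+q}. f (k mod q) (k div q)) = (\<Sum>a<q. f a s)"
    using sum.shift_bounds_nat_ivl[of "\<lambda>k. f (k mod q) (k div q)" 0 "s*q" q]
    by (simp add: add.commute lessThan_atLeast0)
  finally show ?case using Suc by simp
qed simp

lemma mod_less_of_less_mult: "(i :: nat) < a * b \<Longrightarrow> i mod a < a"
  by (cases a) auto

lemma div_less_of_less_mult: "(i :: nat) < a * b \<Longrightarrow> i div a < b"
  by (simp add: less_mult_imp_div_less mult.commute)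

lemma vecm_carrier [simp]: "vecm X \<in> carrier_mat (dim_row X * dim_col X) 1"
  and vecm_dims [simp]: "dim_row (vecm X) = dim_row X * dim_col X" "dim_col (vecm X) = 1"
  by (simp_all add: vecm_def)

lemma vecm_carrier_mat: "X \<in> carrier_mat a b \<Longrightarrow> vecm X \<in> carrier_mat (a*b) 1"
  by auto

lemma vecm_index:
  "k < dim_row X * dim_col X \<Longrightarrow> vecm X $$ (k,0) = X $$ (k mod dim_row X, k div dim_row X)"
  by (simp add: vecm_def)

lemma kron_dims [simp]:
  "dim_row (kron A B) = dim_row A * dim_row B" "dim_col (kron A B) = dim_col A * dim_col B"
  by (simp_all add: kron_def)

lemma kron_index:
  "i < dim_row A * dim_row B \<Longrightarrow> j < dim_col A * dim_col B \<Longrightarrow>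
   kron A B $$ (i,j) = A $$ (i div dim_row B, j div dim_col B) * B $$ (i mod dim_row B, j mod dim_col B)"
  by (simp add: kron_def)

lemma transpose_kron: "transpose_mat (kron A B) = kron (transpose_mat A) (transpose_mat B)"
proof (rule eq_matI)
  fix i j assume i: "i < dim_row (kron (transpose_mat A) (transpose_mat B))"
    and j: "j < dim_col (kron (transpose_mat A) (transpose_mat B))"
  then have "dim_col B > 0" "dim_row B > 0" by (auto intro!: gr0I)
  with i j show "transpose_mat (kron A B) $$ (i, j) = kron (transpose_mat A) (transpose_mat B) $$ (i, j)"
    by (simp add: kron_def less_mult_imp_div_less)
qed auto

lemma kron_mult_vecm:
  assumes A: "A \<in> carrier_mat p q" and B: "B \<in> carrier_mat q s" and C: "C \<in> carrier_mat s t"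
  shows "kron (transpose_mat C) A * vecm B = vecm (A * B * C)"
proof (rule eq_matI)
  fix i j assume "i < dim_row (vecm (A * B * C))" and "j < dim_col (vecm (A * B * C))"
  with A B C have j: "j = 0" and i: "i < t * p" by (auto simp: mult.commute)
  then have "p > 0" by (auto intro!: gr0I)
  have idiv: "i div p < t" using i by (simp add: less_mult_imp_div_less)
  let ?f = "\<lambda>a b. (C $$ (b, i div p) * A $$ (i mod p, a)) * B $$ (a, b)"
  have "(kron (transpose_mat C) A * vecm B) $$ (i, j) = (\<Sum>k<s*q. ?f (k mod q) (k div q))"
    unfolding j using A B C i idiv \<open>p > 0\<close>
    by (simp add: scalar_prod_def lessThan_atLeast0 kron_index vecm_index mult.commute[of s q]
        less_mult_imp_div_less)
  also have "\<dots> = (\<Sum>b<s. \<Sum>a<q. ?f a b)"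
    by (rule sum_lessThan_mult_mod_div)
  also have "\<dots> = vecm (A * B * C) $$ (i, j)"
    unfolding j using A B C i idiv \<open>p > 0\<close>
    by (simp add: vecm_index mult.commute[of t p] scalar_prod_def lessThan_atLeast0
        sum_distrib_left sum_distrib_right mult_ac) (rule sum.swap)
  finally show "(kron (transpose_mat C) A * vecm B) $$ (i, j) = vecm (A * B * C) $$ (i, j)" .
qed (use A B C in auto)

lemma kron_one_left_mult_vecm:
  "A \<in> carrier_mat p q \<Longrightarrow> B \<in> carrier_mat q s \<Longrightarrow> kron (1\<^sub>m s) A * vecm B = vecm (A * B)"
  using kron_mult_vecm[of A p q B s "1\<^sub>m s" s] by simp

lemma kron_one_right_mult_vecm:
  "B \<in> carrier_mat q s \<Longrightarrow> C \<in> carrier_mat s t \<Longrightarrow> kron (transpose_mat C) (1\<^sub>m q) * vecm B = vecm (B * C)"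
  using kron_mult_vecm[of "1\<^sub>m q" q q B s C t] by simp

lemma vecm_add: "X \<in> carrier_mat a b \<Longrightarrow> Y \<in> carrier_mat a b \<Longrightarrow> vecm (X + Y) = vecm X + vecm Y"
  and vecm_minus: "X \<in> carrier_mat a b \<Longrightarrow> Y \<in> carrier_mat a b \<Longrightarrow> vecm (X - Y) = vecm X - vecm Y"
  by (auto simp: mat_eq_iff vecm_def mod_less_of_less_mult div_less_of_less_mult)

lemma vecm_smult: "vecm (k \<cdot>\<^sub>m X) = k \<cdot>\<^sub>m vecm X"
  and vecm_zero: "vecm (0\<^sub>m a b) = 0\<^sub>m (a*b) 1"
  by (auto simp: mat_eq_iff vecm_def mod_less_of_less_mult div_less_of_less_mult)

lemma vecm_eq_iff:
  assumes X: "X \<in> carrier_mat a b" and Y: "Y \<in> carrier_mat a b"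
  shows "vecm X = vecm Y \<longleftrightarrow> X = Y"
proof
  assume eq: "vecm X = vecm Y"
  show "X = Y"
  proof (rule eq_matI)
    fix i j assume "i < dim_row Y" "j < dim_col Y"
    with Y have i: "i < a" and j: "j < b" by auto
    have "i + a*j < a*(j+1)" using i by simp
    also have "\<dots> \<le> a*b" using j by (intro mult_le_mono2) simp
    finally have "i + a*j < a*b" .
    with X Y i j show "X $$ (i, j) = Y $$ (i, j)"
      using arg_cong[OF eq, of "\<lambda>M. M $$ (i + a*j, 0)"] by (simp add: vecm_index)
  qed (use X Y in auto)
qed simp

lemma vecm_eq_0_iff: "X \<in> carrier_mat a b \<Longrightarrow> vecm X = 0\<^sub>m (a*b) 1 \<longleftrightarrow> X = 0\<^sub>m a b"
  using vecm_eq_iff[of X a b "0\<^sub>m a b"] by (simp add: vecm_zero)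

lemma vecm_minus_eq_0_iff:
  "X \<in> carrier_mat a b \<Longrightarrow> Y \<in> carrier_mat a b \<Longrightarrow> vecm X - vecm Y = 0\<^sub>m (a*b) 1 \<longleftrightarrow> X = Y"
  using minus_mat_eq_0_iff[OF vecm_carrier_mat vecm_carrier_mat] vecm_eq_iff by blast

lemma vecm_surj:
  assumes w: "w \<in> carrier_mat (a*b) 1"
  obtains W where "W \<in> carrier_mat a b" "vecm W = w"
proof
  let ?W = "mat a b (\<lambda>(i,j). w $$ (i + a*j, 0))"
  show "?W \<in> carrier_mat a b" by simp
  show "vecm ?W = w"
  proof (rule eq_matI)
    fix i j assume i: "i < dim_row w" and "j < dim_col w"
    moreover from i w have "a > 0" by (auto intro!: gr0I)
    ultimately show "vecm ?W $$ (i, j) = w $$ (i, j)" using w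
      by (simp add: vecm_def less_mult_imp_div_less mult.commute)
  qed (use w in auto)
qed

section \<open>Stacked and block matrices\<close>

lemma vstack_carrier [simp]:
  "a \<in> carrier_mat p c \<Longrightarrow> b \<in> carrier_mat q c \<Longrightarrow> vstack a b \<in> carrier_mat (p+q) c"
  unfolding vstack_def carrier_mat_def by simp

lemma stack3_carrier [simp]:
  "a \<in> carrier_mat p d \<Longrightarrow> b \<in> carrier_mat q d \<Longrightarrow> c \<in> carrier_mat t d
   \<Longrightarrow> stack3 a b c \<in> carrier_mat (p+q+t) d"
  unfolding stack3_def by simp

lemma block3_carrier:
  assumes "M11 \<in> carrier_mat k1 p" "M12 \<in> carrier_mat k1 q" "M13 \<in> carrier_mat k1 t"
    "M21 \<in> carrier_mat k2 p" "M22 \<in> carrier_mat k2 q" "M23 \<in> carrier_mat k2 t"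
    "M31 \<in> carrier_mat k3 p" "M32 \<in> carrier_mat k3 q" "M33 \<in> carrier_mat k3 t"
  shows "block3 M11 M12 M13 M21 M22 M23 M31 M32 M33 \<in> carrier_mat (k1+k2+k3) (p+q+t)"
  unfolding block3_def hstack_def using assms by (intro four_block_carrier_mat) auto

lemma vstack_eq_iff:
  assumes "a \<in> carrier_mat p c" "b \<in> carrier_mat q c" "a' \<in> carrier_mat p c" "b' \<in> carrier_mat q c"
  shows "vstack a b = vstack a' b' \<longleftrightarrow> a = a' \<and> b = b'"
proof (intro iffI conjI)
  assume eq: "vstack a b = vstack a' b'"
  show "a = a'"
  proof (rule eq_matI)
    fix i j assume "i < dim_row a'" "j < dim_col a'"
    then show "a $$ (i, j) = a' $$ (i, j)"
      using arg_cong[OF eq, of "\<lambda>M. M $$ (i,j)"] assms by (simp add: vstack_def)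
  qed (use assms in auto)
  show "b = b'"
  proof (rule eq_matI)
    fix i j assume "i < dim_row b'" "j < dim_col b'"
    then show "b $$ (i, j) = b' $$ (i, j)"
      using arg_cong[OF eq, of "\<lambda>M. M $$ (p+i,j)"] assms by (simp add: vstack_def)
  qed (use assms in auto)
qed auto

lemma vstack_add:
  assumes "a \<in> carrier_mat p c" "b \<in> carrier_mat q c" "a' \<in> carrier_mat p c" "b' \<in> carrier_mat q c"
  shows "vstack a b + vstack a' b' = vstack (a + a') (b + b')"
  by (rule eq_matI) (use assms in \<open>auto simp: vstack_def\<close>)

lemma vstack_minus:
  assumes "a \<in> carrier_mat p c" "b \<in> carrier_mat q c" "a' \<in> carrier_mat p c" "b' \<in> carrier_mat q c"
  shows "vstack a b - vstack a' b' = vstack (a - a') (b - b')"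
  by (rule eq_matI) (use assms in \<open>auto simp: vstack_def\<close>)

lemma vstack_zero: "vstack (0\<^sub>m p c) (0\<^sub>m q c) = 0\<^sub>m (p+q) c"
  by (rule eq_matI) (auto simp: vstack_def)

lemma vstack_mult:
  assumes A: "A \<in> carrier_mat p k" and B: "B \<in> carrier_mat q k" and c: "c \<in> carrier_mat k d"
  shows "vstack A B * c = vstack (A * c) (B * c)"
  by (rule eq_matI) (use assms in \<open>auto simp: vstack_def scalar_prod_def\<close>)

lemma four_block_mat_mult_vstack:
  assumes M: "M11 \<in> carrier_mat k1 p" "M12 \<in> carrier_mat k1 q" "M21 \<in> carrier_mat k2 p" "M22 \<in> carrier_mat k2 q"
    and a: "a \<in> carrier_mat p d" and b: "b \<in> carrier_mat q d"
  shows "four_block_mat M11 M12 M21 M22 * vstack a b = vstack (M11 * a + M12 * b) (M21 * a + M22 * b)"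
proof -
  have "four_block_mat M11 M12 M21 M22 * vstack a b
      = four_block_mat (M11 * a + M12 * b) (M11 * 0\<^sub>m p 0 + M12 * 0\<^sub>m q 0)
          (M21 * a + M22 * b) (M21 * 0\<^sub>m p 0 + M22 * 0\<^sub>m q 0)"
    unfolding vstack_def carrier_matD(1)[OF a] carrier_matD(1)[OF b]
    by (rule mult_four_block_mat) (use M a b in auto)
  also have "\<dots> = vstack (M11 * a + M12 * b) (M21 * a + M22 * b)"
    unfolding vstack_def using M a b by (intro cong_four_block_mat) auto
  finally show ?thesis .
qed

lemma hstack_mult_vstack:
  assumes "M1 \<in> carrier_mat k p" "M2 \<in> carrier_mat k q" "a \<in> carrier_mat p d" "b \<in> carrier_mat q d"
  shows "hstack M1 M2 * vstack a b = M1 * a + M2 * b"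
proof -
  have "hstack M1 M2 * vstack a b = four_block_mat (M1 * a + M2 * b) (M1 * 0\<^sub>m p 0 + M2 * 0\<^sub>m q 0)
      (0\<^sub>m 0 p * a + 0\<^sub>m 0 q * b) (0\<^sub>m 0 p * 0\<^sub>m p 0 + 0\<^sub>m 0 q * 0\<^sub>m q 0)"
    unfolding vstack_def hstack_def using assms by (subst mult_four_block_mat) auto
  also have "\<dots> = M1 * a + M2 * b"
    by (rule eq_matI) (use assms in auto)
  finally show ?thesis .
qed

lemma block3_mult_stack3:
  assumes M: "M11 \<in> carrier_mat k1 p" "M12 \<in> carrier_mat k1 q" "M13 \<in> carrier_mat k1 t"
    "M21 \<in> carrier_mat k2 p" "M22 \<in> carrier_mat k2 q" "M23 \<in> carrier_mat k2 t"
    "M31 \<in> carrier_mat k3 p" "M32 \<in> carrier_mat k3 q" "M33 \<in> carrier_mat k3 t"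
    and v: "a \<in> carrier_mat p d" "b \<in> carrier_mat q d" "c \<in> carrier_mat t d"
  shows "block3 M11 M12 M13 M21 M22 M23 M31 M32 M33 * stack3 a b c =
    stack3 (M11 * a + M12 * b + M13 * c) (M21 * a + M22 * b + M23 * c) (M31 * a + M32 * b + M33 * c)"
proof -
  have "block3 M11 M12 M13 M21 M22 M23 M31 M32 M33 * stack3 a b c =
    vstack (four_block_mat M11 M12 M21 M22 * vstack a b + vstack M13 M23 * c)
           (hstack M31 M32 * vstack a b + M33 * c)"
    unfolding block3_def stack3_def using M v
    by (intro four_block_mat_mult_vstack) (auto simp: hstack_def intro!: four_block_carrier_mat)
  also have "\<dots> = stack3 (M11 * a + M12 * b + M13 * c) (M21 * a + M22 * b + M23 * c)
      (M31 * a + M32 * b + M33 * c)"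
    unfolding stack3_def four_block_mat_mult_vstack[OF M(1,2,4,5) v(1,2)] vstack_mult[OF M(3,6) v(3)]
      hstack_mult_vstack[OF M(7,8) v(1,2)]
    using M v by (subst vstack_add[of _ k1 d _ k2]) auto
  finally show ?thesis .
qed

lemma transpose_block3:
  assumes "M11 \<in> carrier_mat k1 p" "M12 \<in> carrier_mat k1 q" "M13 \<in> carrier_mat k1 t"
    "M21 \<in> carrier_mat k2 p" "M22 \<in> carrier_mat k2 q" "M23 \<in> carrier_mat k2 t"
    "M31 \<in> carrier_mat k3 p" "M32 \<in> carrier_mat k3 q" "M33 \<in> carrier_mat k3 t"
  shows "transpose_mat (block3 M11 M12 M13 M21 M22 M23 M31 M32 M33) =
    block3 (transpose_mat M11) (transpose_mat M21) (transpose_mat M31)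
           (transpose_mat M12) (transpose_mat M22) (transpose_mat M32)
           (transpose_mat M13) (transpose_mat M23) (transpose_mat M33)"
  by (rule eq_matI) (use assms in \<open>auto simp: block3_def vstack_def hstack_def\<close>)

lemma stack3_eq_iff:
  assumes "a \<in> carrier_mat p d" "b \<in> carrier_mat q d" "c \<in> carrier_mat t d"
    "a' \<in> carrier_mat p d" "b' \<in> carrier_mat q d" "c' \<in> carrier_mat t d"
  shows "stack3 a b c = stack3 a' b' c' \<longleftrightarrow> a = a' \<and> b = b' \<and> c = c'"
  unfolding stack3_def using assms
  by (subst vstack_eq_iff[of _ "p+q" d _ t]) (auto simp: vstack_eq_iff)

lemma stack3_add:
  assumes "a \<in> carrier_mat p d" "b \<in> carrier_mat q d" "c \<in> carrier_mat t d"
    "a' \<in> carrier_mat p d" "b' \<in> carrier_mat q d" "c' \<in> carrier_mat t d"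
  shows "stack3 a b c + stack3 a' b' c' = stack3 (a + a') (b + b') (c + c')"
  unfolding stack3_def using assms
  by (subst vstack_add[of _ "p+q" d _ t]) (auto simp: vstack_add)

lemma stack3_minus:
  assumes "a \<in> carrier_mat p d" "b \<in> carrier_mat q d" "c \<in> carrier_mat t d"
    "a' \<in> carrier_mat p d" "b' \<in> carrier_mat q d" "c' \<in> carrier_mat t d"
  shows "stack3 a b c - stack3 a' b' c' = stack3 (a - a') (b - b') (c - c')"
  unfolding stack3_def using assms
  by (subst vstack_minus[of _ "p+q" d _ t]) (auto simp: vstack_minus)

lemma stack3_eq_0_iff:
  assumes "a \<in> carrier_mat p d" "b \<in> carrier_mat q d" "c \<in> carrier_mat t d"
  shows "stack3 a b c = 0\<^sub>m (p+q+t) d \<longleftrightarrow> a = 0\<^sub>m p d \<and> b = 0\<^sub>m q d \<and> c = 0\<^sub>m t d"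
  using stack3_eq_iff[OF assms, of "0\<^sub>m p d" "0\<^sub>m q d" "0\<^sub>m t d"]
  by (simp add: stack3_def vstack_zero)

section \<open>The tangent-space projection\<close>

locale orthonormal_cols =
  fixes Q :: "real mat" and k r :: nat
  assumes carrier: "Q \<in> carrier_mat k r" and transpose_mult_self [simp]: "transpose_mat Q * Q = 1\<^sub>m r"
begin

lemma dims [simp]: "dim_row Q = k" "dim_col Q = r"
  using carrier by auto

lemma transpose_mult_mult_self [simp]: "dim_row Z = r \<Longrightarrow> transpose_mat Q * (Q * Z) = Z"
  by (subst mult_assoc_dims[symmetric]) (auto simp del: assoc_mult_mat)

end

lemma transpose_proj_mat:
  "transpose_mat (Q * transpose_mat Q) = Q * transpose_mat (Q :: 'a :: comm_semiring_0 mat)"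
  using transpose_mult[of Q "dim_row Q" "dim_col Q" "transpose_mat Q" "dim_row Q"] by simp

lemma transpose_compl_proj_mat:
  "Q \<in> carrier_mat k r \<Longrightarrow> transpose_mat (1\<^sub>m k - Q * transpose_mat Q) = 1\<^sub>m k - Q * transpose_mat Q"
  for Q :: "'a :: comm_ring_1 mat"
  by (subst transpose_minus[of _ k k]) (auto simp: transpose_proj_mat)

definition tangent_proj_mat :: "nat \<Rightarrow> nat \<Rightarrow> real mat \<Rightarrow> real mat \<Rightarrow> real mat \<Rightarrow> real mat" where
  "tangent_proj_mat n m U V W =
       (U * transpose_mat U) * W * (V * transpose_mat V)
     + (1\<^sub>m n - U * transpose_mat U) * W * (V * transpose_mat V)
     + (U * transpose_mat U) * W * (1\<^sub>m m - V * transpose_mat V)"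

lemma tangent_proj_mat_carrier:
  "U \<in> carrier_mat n r \<Longrightarrow> V \<in> carrier_mat m r \<Longrightarrow> W \<in> carrier_mat n m
   \<Longrightarrow> tangent_proj_mat n m U V W \<in> carrier_mat n m"
  unfolding tangent_proj_mat_def by auto

lemma tangent_proj_mult_vecm:
  assumes U: "U \<in> carrier_mat n r" and V: "V \<in> carrier_mat m r" and W: "W \<in> carrier_mat n m"
  shows "tangent_proj n m U V * vecm W = vecm (tangent_proj_mat n m U V W)"
proof -
  let ?PU = "U * transpose_mat U" and ?PV = "V * transpose_mat V"
  have PU: "?PU \<in> carrier_mat n n" "1\<^sub>m n - ?PU \<in> carrier_mat n n" using U by auto
  have PV: "?PV \<in> carrier_mat m m" "1\<^sub>m m - ?PV \<in> carrier_mat m m" using V by auto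
  have kron_vecm: "kron F E * vecm W = vecm (E * W * F)"
    if "E \<in> carrier_mat n n" "F \<in> carrier_mat m m" "transpose_mat F = F" for E F
    using kron_mult_vecm[OF that(1) W, of "transpose_mat F" m] that by simp
  have "tangent_proj n m U V * vecm W
      = kron ?PV ?PU * vecm W + kron ?PV (1\<^sub>m n - ?PU) * vecm W + kron (1\<^sub>m m - ?PV) ?PU * vecm W"
    unfolding tangent_proj_def using U V PU PV W
    by (subst add_mult_distrib_dims; simp add: mult.commute[of m n])+
  also have "\<dots> = vecm (?PU * W * ?PV) + vecm ((1\<^sub>m n - ?PU) * W * ?PV) + vecm (?PU * W * (1\<^sub>m m - ?PV))"
    using PU PV V by (simp only: kron_vecm transpose_proj_mat transpose_compl_proj_mat)
  also have "\<dots> = vecm (tangent_proj_mat n m U V W)"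
    unfolding tangent_proj_mat_def using PU PV W by (simp add: vecm_add[of _ n m])
  finally show ?thesis .
qed

lemma transpose_tangent_proj:
  assumes U: "U \<in> carrier_mat n r" and V: "V \<in> carrier_mat m r"
  shows "transpose_mat (tangent_proj n m U V) = tangent_proj n m U V"
proof -
  let ?PU = "U * transpose_mat U" and ?PV = "V * transpose_mat V"
  have k1: "kron ?PV ?PU \<in> carrier_mat (m*n) (m*n)"
    and k2: "kron ?PV (1\<^sub>m n - ?PU) \<in> carrier_mat (m*n) (m*n)"
    and k3: "kron (1\<^sub>m m - ?PV) ?PU \<in> carrier_mat (m*n) (m*n)"
    using U V by auto
  have k12: "kron ?PV ?PU + kron ?PV (1\<^sub>m n - ?PU) \<in> carrier_mat (m*n) (m*n)"
    using k1 k2 by simp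
  show ?thesis
    unfolding tangent_proj_def transpose_add[OF k12 k3] transpose_add[OF k1 k2]
    using U V by (simp add: transpose_kron transpose_proj_mat transpose_compl_proj_mat)
qed

lemma tangent_proj_mat_eq_minus_compl:
  assumes U: "U \<in> carrier_mat n r" and V: "V \<in> carrier_mat m r" and Y: "Y \<in> carrier_mat n m"
  shows "tangent_proj_mat n m U V Y
    = Y - (1\<^sub>m n - U * transpose_mat U) * Y * (1\<^sub>m m - V * transpose_mat V)"
  using assms
  by (auto simp: mat_eq_iff tangent_proj_mat_def mult_dims_simps algebra_simps)

lemma tangent_proj_mult_vecm_id:
  assumes U: "U \<in> carrier_mat n r" and V: "V \<in> carrier_mat m r" and Y: "Y \<in> carrier_mat n m"
    and "(1\<^sub>m n - U * transpose_mat U) * Y * (1\<^sub>m m - V * transpose_mat V) = 0\<^sub>m n m"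
  shows "tangent_proj n m U V * vecm Y = vecm Y"
  using assms by (simp add: tangent_proj_mult_vecm tangent_proj_mat_eq_minus_compl)

lemma vecm_inner_sandwich:
  assumes U: "U \<in> carrier_mat n r" and V: "V \<in> carrier_mat m r" and S: "S \<in> carrier_mat r r"
    and Y: "Y \<in> carrier_mat n m"
  shows "transpose_mat (vecm (U * S * transpose_mat V)) * vecm Y
       = transpose_mat (vecm S) * vecm (transpose_mat U * Y * V)"
proof -
  have K: "kron V U \<in> carrier_mat (m*n) (r*r)" and s: "vecm S \<in> carrier_mat (r*r) 1"
    and y: "vecm Y \<in> carrier_mat (m*n) 1"
    using U V S Y by (auto simp: mult.commute)
  have "transpose_mat (vecm (U * S * transpose_mat V)) * vecm Y
      = transpose_mat (kron V U * vecm S) * vecm Y"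
    using kron_mult_vecm[OF U S, of "transpose_mat V" m] V by simp
  also have "\<dots> = transpose_mat (vecm S) * (transpose_mat (kron V U) * vecm Y)"
    using K s y by (simp add: transpose_mult[OF K s] assoc_mult_mat[of _ 1 "r*r" _ "m*n"])
  also have "transpose_mat (kron V U) * vecm Y = vecm (transpose_mat U * Y * V)"
    unfolding transpose_kron using kron_mult_vecm[of "transpose_mat U" r n Y m V r] U V Y by simp
  finally show ?thesis .
qed

context
  fixes U V :: "real mat" and n m r :: nat
  assumes U: "U \<in> carrier_mat n r" and V: "V \<in> carrier_mat m r"
    and UU: "transpose_mat U * U = 1\<^sub>m r" and VV: "transpose_mat V * V = 1\<^sub>m r"
begin

interpretation U: orthonormal_cols U n r using U UU by unfold_locales
interpretation V: orthonormal_cols V m r using V VV by unfold_locales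

lemma tangent_proj_mat_mult_right: "W \<in> carrier_mat n m \<Longrightarrow> tangent_proj_mat n m U V W * V = W * V"
  by (auto simp: tangent_proj_mat_eq_minus_compl[OF U V] mult_dims_simps)

lemma transpose_mult_tangent_proj_mat:
  "W \<in> carrier_mat n m \<Longrightarrow> transpose_mat U * tangent_proj_mat n m U V W = transpose_mat U * W"
  by (auto simp: tangent_proj_mat_eq_minus_compl[OF U V] mult_dims_simps)

lemma tangent_proj_mat_eq_smult_iff:
  assumes W: "W \<in> carrier_mat n m" and S: "S \<in> carrier_mat r r"
  shows "tangent_proj_mat n m U V W = s \<cdot>\<^sub>m (U * S * transpose_mat V) \<longleftrightarrow>
     W * V = U * (transpose_mat U * W * V)
     \<and> transpose_mat U * W = transpose_mat U * W * V * transpose_mat V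
     \<and> transpose_mat U * W * V = s \<cdot>\<^sub>m S"
    (is "?Z = _ \<longleftrightarrow> ?right \<and> ?left \<and> ?core")
proof
  have [simp]: "dim_row W = n" "dim_col W = m" "dim_row S = r" "dim_col S = r" using W S by auto
  assume Z: "?Z = s \<cdot>\<^sub>m (U * S * transpose_mat V)"
  have core: ?core
  proof -
    have "transpose_mat U * W * V = transpose_mat U * ?Z * V"
      using transpose_mult_tangent_proj_mat[OF W] by simp
    also have "\<dots> = s \<cdot>\<^sub>m S" unfolding Z by (simp add: mult_dims_simps)
    finally show ?thesis .
  qed
  have "W * V = ?Z * V" using tangent_proj_mat_mult_right[OF W] by simp
  also have "\<dots> = U * (s \<cdot>\<^sub>m S)" unfolding Z by (simp add: mult_dims_simps)
  finally have right: ?right unfolding core .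
  have "transpose_mat U * W = transpose_mat U * ?Z"
    using transpose_mult_tangent_proj_mat[OF W] by simp
  also have "\<dots> = (s \<cdot>\<^sub>m S) * transpose_mat V" unfolding Z by (simp add: mult_dims_simps)
  finally have ?left unfolding core .
  with right core show "?right \<and> ?left \<and> ?core" by simp
next
  have [simp]: "dim_row W = n" "dim_col W = m" "dim_row S = r" "dim_col S = r" using W S by auto
  assume "?right \<and> ?left \<and> ?core"
  then have right: ?right and left: ?left and core: ?core by auto
  have "W * (V * transpose_mat V) = (W * V) * transpose_mat V" by (simp add: mult_assoc_dims)
  also have "\<dots> = U * (s \<cdot>\<^sub>m S) * transpose_mat V" by (subst right) (simp add: core)
  finally have WVV: "W * (V * transpose_mat V) = U * (s \<cdot>\<^sub>m S) * transpose_mat V" .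
  have UUW: "U * (transpose_mat U * W) = U * ((s \<cdot>\<^sub>m S) * transpose_mat V)"
    using left core by simp
  have "U * (transpose_mat U * (W * (V * transpose_mat V)))
      = U * ((transpose_mat U * W * V) * transpose_mat V)"
    by (simp add: mult_assoc_dims)
  then have UUWVV: "U * (transpose_mat U * (W * (V * transpose_mat V))) = U * ((s \<cdot>\<^sub>m S) * transpose_mat V)"
    unfolding core .
  from WVV UUW UUWVV show "?Z = s \<cdot>\<^sub>m (U * S * transpose_mat V)"
    unfolding tangent_proj_mat_def by (simp add: mult_dims_simps)
qed

end

lemma tangent_proj_mult_point:
  assumes U: "U \<in> carrier_mat n r" and V: "V \<in> carrier_mat m r" and S: "S \<in> carrier_mat r r"
    and UU: "transpose_mat U * U = 1\<^sub>m r" and VV: "transpose_mat V * V = 1\<^sub>m r"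
  shows "tangent_proj n m U V * vecm (U * S * transpose_mat V) = vecm (U * S * transpose_mat V)"
proof -
  interpret U: orthonormal_cols U n r using U UU by unfold_locales
  interpret V: orthonormal_cols V m r using V VV by unfold_locales
  show ?thesis
    using S by (intro tangent_proj_mult_vecm_id[OF U V]) (auto simp: mult_dims_simps)
qed

section \<open>Local coordinates\<close>

definition gauge_mat :: "nat \<Rightarrow> nat \<Rightarrow> nat \<Rightarrow> real mat \<Rightarrow> real mat \<Rightarrow> real mat \<Rightarrow> real mat" where
  "gauge_mat n m r U V S =
     block3 (kron (1\<^sub>m r) U) (0\<^sub>m (n*r) (r*r)) (0\<^sub>m (n*r) 1)
            (0\<^sub>m (m*r) (r*r)) (kron V (1\<^sub>m r)) (0\<^sub>m (m*r) 1)
            (0\<^sub>m (r*r) (r*r)) (0\<^sub>m (r*r) (r*r)) (vecm S)"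

definition local_coords :: "nat \<Rightarrow> nat \<Rightarrow> real mat \<Rightarrow> real mat \<Rightarrow> real mat \<Rightarrow> real mat" where
  "local_coords n m U V w =
     stack3 (transpose_mat (Ev n V) * w) (transpose_mat (Eu m U) * w) (transpose_mat (Evu U V) * w)"

definition local_mat :: "nat \<Rightarrow> nat \<Rightarrow> real mat \<Rightarrow> real mat \<Rightarrow> real mat \<Rightarrow> real mat" where
  "local_mat n m U V M =
     block3 (loc_block (Ev n V) M (Ev n V)) (loc_block (Ev n V) M (Eu m U)) (loc_block (Ev n V) M (Evu U V))
            (loc_block (Eu m U) M (Ev n V)) (loc_block (Eu m U) M (Eu m U)) (loc_block (Eu m U) M (Evu U V))
            (loc_block (Evu U V) M (Ev n V)) (loc_block (Evu U V) M (Eu m U)) (loc_block (Evu U V) M (Evu U V))"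

lemma local_bases_carrier:
  assumes "U \<in> carrier_mat n r" "V \<in> carrier_mat m r"
  shows "Ev n V \<in> carrier_mat (n*m) (n*r)" "Eu m U \<in> carrier_mat (n*m) (m*r)"
    "Evu U V \<in> carrier_mat (n*m) (r*r)"
  using assms by (auto simp: Ev_def Eu_def Evu_def mult.commute)

lemma local_bases_mult_vecm:
  assumes U: "U \<in> carrier_mat n r" and V: "V \<in> carrier_mat m r"
  shows "G \<in> carrier_mat n r \<Longrightarrow> Ev n V * vecm G = vecm (G * transpose_mat V)"
    and "H \<in> carrier_mat r m \<Longrightarrow> Eu m U * vecm H = vecm (U * H)"
    and "K \<in> carrier_mat r r \<Longrightarrow> Evu U V * vecm K = vecm (U * K * transpose_mat V)"
  using kron_one_right_mult_vecm[of G n r "transpose_mat V" m] kron_one_left_mult_vecm[OF U, of H m]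
    kron_mult_vecm[OF U, of K r "transpose_mat V" m] V
  by (simp_all add: Ev_def Eu_def Evu_def)

lemma local_coords_vecm:
  assumes U: "U \<in> carrier_mat n r" and V: "V \<in> carrier_mat m r" and W: "W \<in> carrier_mat n m"
  shows "local_coords n m U V (vecm W)
       = stack3 (vecm (W * V)) (vecm (transpose_mat U * W)) (vecm (transpose_mat U * W * V))"
  using kron_one_right_mult_vecm[OF W V] kron_one_left_mult_vecm[of "transpose_mat U" r n W m]
    kron_mult_vecm[of "transpose_mat U" r n W m V r] U V W
  by (simp add: local_coords_def Ev_def Eu_def Evu_def transpose_kron)

lemma local_coords_carrier:
  "U \<in> carrier_mat n r \<Longrightarrow> V \<in> carrier_mat m r \<Longrightarrow> w \<in> carrier_mat (n*m) 1
   \<Longrightarrow> local_coords n m U V w \<in> carrier_mat (n*r + m*r + r*r) 1"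
  using local_bases_carrier[of U n r V m] by (auto simp: local_coords_def)

lemma local_coords_add:
  assumes "U \<in> carrier_mat n r" "V \<in> carrier_mat m r" "w \<in> carrier_mat (n*m) 1" "w' \<in> carrier_mat (n*m) 1"
  shows "local_coords n m U V (w + w') = local_coords n m U V w + local_coords n m U V w'"
  using assms local_bases_carrier[OF assms(1,2)]
  by (simp add: local_coords_def stack3_add[of _ "n*r" 1 _ "m*r" _ "r*r"] mult_add_distrib_mat[of _ _ "n*m"])

lemma local_mat_mult_stack3:
  assumes U: "U \<in> carrier_mat n r" and V: "V \<in> carrier_mat m r" and M: "M \<in> carrier_mat (n*m) (n*m)"
    and a: "a \<in> carrier_mat (n*r) 1" and b: "b \<in> carrier_mat (m*r) 1" and c: "c \<in> carrier_mat (r*r) 1"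
  shows "local_mat n m U V M * stack3 a b c
       = local_coords n m U V (M * (Ev n V * a + Eu m U * b + Evu U V * c))"
proof -
  note E = local_bases_carrier[OF U V]
  have block: "loc_block E1 M E2 * v = transpose_mat E1 * (M * (E2 * v))"
    if "E1 \<in> carrier_mat (n*m) k1" "E2 \<in> carrier_mat (n*m) k2" "v \<in> carrier_mat k2 1" for E1 E2 v k1 k2
    unfolding loc_block_def using that M by (simp add: mult_assoc_dims)
  have block_carrier: "loc_block E1 M E2 \<in> carrier_mat k1 k2"
    if "E1 \<in> carrier_mat (n*m) k1" "E2 \<in> carrier_mat (n*m) k2" for E1 E2 k1 k2
    unfolding loc_block_def using that M by auto
  show ?thesis
    unfolding local_mat_def local_coords_def
    using E a b c M
    by (subst block3_mult_stack3[OF block_carrier[OF E(1) E(1)] block_carrier[OF E(1) E(2)]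
          block_carrier[OF E(1) E(3)] block_carrier[OF E(2) E(1)] block_carrier[OF E(2) E(2)]
          block_carrier[OF E(2) E(3)] block_carrier[OF E(3) E(1)] block_carrier[OF E(3) E(2)]
          block_carrier[OF E(3) E(3)] a b c])
      (simp add: block mult_add_distrib_dims)
qed

lemma local_mat_carrier:
  "U \<in> carrier_mat n r \<Longrightarrow> V \<in> carrier_mat m r \<Longrightarrow> M \<in> carrier_mat (n*m) (n*m)
   \<Longrightarrow> local_mat n m U V M \<in> carrier_mat (n*r + m*r + r*r) (n*r + m*r + r*r)"
  unfolding local_mat_def loc_block_def using local_bases_carrier[of U n r V m]
  by (intro block3_carrier) auto

text \<open>The vectorisation of the \<open>r \<times> m\<close> matrix \<open>V\<^sub>\<xi>\<^sup>T\<close> has \<open>r * m\<close> rows, while the block structure of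
  \<open>B\<close> and \<open>C\<^sub>l\<^sub>o\<^sub>c\<close> counts them as \<open>m * r\<close>; the two products are not syntactically equal.\<close>

lemma tangent_coords_carrier:
  assumes "U\<^sub>\<xi> \<in> carrier_mat n r" "V\<^sub>\<xi> \<in> carrier_mat m r" "S\<^sub>\<xi> \<in> carrier_mat r r"
  shows "vecm U\<^sub>\<xi> \<in> carrier_mat (n*r) 1" "vecm (transpose_mat V\<^sub>\<xi>) \<in> carrier_mat (m*r) 1"
    "vecm S\<^sub>\<xi> \<in> carrier_mat (r*r) 1"
  using vecm_carrier_mat[OF assms(1)] vecm_carrier_mat[of "transpose_mat V\<^sub>\<xi>" r m]
    vecm_carrier_mat[OF assms(3)] assms(2)
  by (simp_all add: mult.commute[of r m])

lemma tangent_vecm_eq_local_bases: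
  assumes U: "U \<in> carrier_mat n r" and V: "V \<in> carrier_mat m r"
    and Ux: "U\<^sub>\<xi> \<in> carrier_mat n r" and Vx: "V\<^sub>\<xi> \<in> carrier_mat m r" and Sx: "S\<^sub>\<xi> \<in> carrier_mat r r"
  shows "vecm (U\<^sub>\<xi> * transpose_mat V + U * transpose_mat V\<^sub>\<xi> + U * S\<^sub>\<xi> * transpose_mat V)
       = Ev n V * vecm U\<^sub>\<xi> + Eu m U * vecm (transpose_mat V\<^sub>\<xi>) + Evu U V * vecm S\<^sub>\<xi>"
  using assms
  by (simp add: local_bases_mult_vecm[OF U V] vecm_add[of _ n m] add_carrier_mat[of _ n m])

lemma loc_blocks_mult_eq_local_coords:
  assumes U: "U \<in> carrier_mat n r" and V: "V \<in> carrier_mat m r" and S: "S \<in> carrier_mat r r"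
    and A: "A \<in> carrier_mat (n*m) (n*m)"
  shows "stack3 (loc_block (Ev n V) A (Ev n V) * vecm (U * S))
                (loc_block (Eu m U) A (Eu m U) * vecm (S * transpose_mat V))
                (loc_block (Evu U V) A (Evu U V) * vecm S)
       = local_coords n m U V (A * vecm (U * S * transpose_mat V))"
proof -
  note E = local_bases_carrier[OF U V]
  have block: "loc_block E' A E' * v = transpose_mat E' * (A * (E' * v))"
    if "E' \<in> carrier_mat (n*m) k" "dim_row v = k" for E' v k
    unfolding loc_block_def using that A by (simp add: mult_assoc_dims)
  have "Ev n V * vecm (U * S) = vecm (U * S * transpose_mat V)"
    "Eu m U * vecm (S * transpose_mat V) = vecm (U * S * transpose_mat V)"
    "Evu U V * vecm S = vecm (U * S * transpose_mat V)"
    using local_bases_mult_vecm[OF U V] U V S by (auto simp: mult_assoc_dims)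
  then show ?thesis
    unfolding local_coords_def using U V S
    by (simp add: block[OF E(1)] block[OF E(2)] block[OF E(3)] mult.commute)
qed

lemma local_coords_tangent_add:
  assumes U: "U \<in> carrier_mat n r" and V: "V \<in> carrier_mat m r" and M: "M \<in> carrier_mat (n*m) (n*m)"
    and Ux: "U\<^sub>\<xi> \<in> carrier_mat n r" and Vx: "V\<^sub>\<xi> \<in> carrier_mat m r" and Sx: "S\<^sub>\<xi> \<in> carrier_mat r r"
    and w: "w \<in> carrier_mat (n*m) 1"
  shows "local_coords n m U V
           (M * vecm (U\<^sub>\<xi> * transpose_mat V + U * transpose_mat V\<^sub>\<xi> + U * S\<^sub>\<xi> * transpose_mat V) + w)
       = local_mat n m U V M * stack3 (vecm U\<^sub>\<xi>) (vecm (transpose_mat V\<^sub>\<xi>)) (vecm S\<^sub>\<xi>)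
         + local_coords n m U V w"
proof -
  have M\<xi>: "M * vecm (U\<^sub>\<xi> * transpose_mat V + U * transpose_mat V\<^sub>\<xi> + U * S\<^sub>\<xi> * transpose_mat V)
      \<in> carrier_mat (n*m) 1"
    using M U V Ux Vx Sx by auto
  show ?thesis
    unfolding local_coords_add[OF U V M\<xi> w]
    unfolding tangent_vecm_eq_local_bases[OF U V Ux Vx Sx]
      local_mat_mult_stack3[OF U V M tangent_coords_carrier[OF Ux Vx Sx]] ..
qed

lemma gauge_mat_carrier:
  "U \<in> carrier_mat n r \<Longrightarrow> V \<in> carrier_mat m r \<Longrightarrow> S \<in> carrier_mat r r
   \<Longrightarrow> gauge_mat n m r U V S \<in> carrier_mat (n*r + m*r + r*r) (r*r + r*r + 1)"
  unfolding gauge_mat_def by (rule block3_carrier) (auto simp: mult.commute)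

lemma transpose_gauge_mat_mult:
  assumes U: "U \<in> carrier_mat n r" and V: "V \<in> carrier_mat m r" and S: "S \<in> carrier_mat r r"
    and G: "G1 \<in> carrier_mat n r" "G2 \<in> carrier_mat r m" "G3 \<in> carrier_mat r r"
  shows "transpose_mat (gauge_mat n m r U V S) * stack3 (vecm G1) (vecm G2) (vecm G3) =
     stack3 (vecm (transpose_mat U * G1)) (vecm (G2 * V)) (transpose_mat (vecm S) * vecm G3)"
proof -
  have c: "kron (1\<^sub>m r) U \<in> carrier_mat (n*r) (r*r)" "kron V (1\<^sub>m r) \<in> carrier_mat (m*r) (r*r)"
    "vecm S \<in> carrier_mat (r*r) 1"
    using U V S by (auto simp: mult.commute)
  have g: "vecm G1 \<in> carrier_mat (n*r) 1" "vecm G2 \<in> carrier_mat (m*r) 1" "vecm G3 \<in> carrier_mat (r*r) 1"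
    using G by (auto simp: mult.commute)
  have "transpose_mat (gauge_mat n m r U V S) * stack3 (vecm G1) (vecm G2) (vecm G3)
      = stack3 (transpose_mat (kron (1\<^sub>m r) U) * vecm G1) (transpose_mat (kron V (1\<^sub>m r)) * vecm G2)
          (transpose_mat (vecm S) * vecm G3)"
  proof -
    have tB: "transpose_mat (gauge_mat n m r U V S) =
      block3 (transpose_mat (kron (1\<^sub>m r) U)) (0\<^sub>m (r*r) (m*r)) (0\<^sub>m (r*r) (r*r))
             (0\<^sub>m (r*r) (n*r)) (transpose_mat (kron V (1\<^sub>m r))) (0\<^sub>m (r*r) (r*r))
             (0\<^sub>m 1 (n*r)) (0\<^sub>m 1 (m*r)) (transpose_mat (vecm S))"
      unfolding gauge_mat_def by (subst transpose_block3[OF c(1) _ _ _ c(2) _ _ _ c(3)]) auto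
    have t: "transpose_mat (kron (1\<^sub>m r) U) \<in> carrier_mat (r*r) (n*r)"
      "transpose_mat (kron V (1\<^sub>m r)) \<in> carrier_mat (r*r) (m*r)"
      "transpose_mat (vecm S) \<in> carrier_mat 1 (r*r)"
      using c by auto
    show ?thesis
      unfolding tB by (subst block3_mult_stack3[OF t(1) _ _ _ t(2) _ _ _ t(3) g]; use t g in
          \<open>auto simp: left_mult_zero_mat[OF g(1)] left_mult_zero_mat[OF g(2)] left_mult_zero_mat[OF g(3)]\<close>)
  qed
  also have "\<dots> = stack3 (vecm (transpose_mat U * G1)) (vecm (G2 * V)) (transpose_mat (vecm S) * vecm G3)"
    unfolding transpose_kron transpose_one
    using kron_one_left_mult_vecm[of "transpose_mat U" r n G1 r] kron_one_right_mult_vecm[of G2 r m V r]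
      U V G by simp
  finally show ?thesis .
qed

lemma gauge_mat_mult:
  assumes U: "U \<in> carrier_mat n r" and V: "V \<in> carrier_mat m r" and S: "S \<in> carrier_mat r r"
    and H: "H1 \<in> carrier_mat r r" "H2 \<in> carrier_mat r r" "\<sigma> \<in> carrier_mat 1 1"
  shows "gauge_mat n m r U V S * stack3 (vecm H1) (vecm H2) \<sigma> =
     stack3 (vecm (U * H1)) (vecm (H2 * transpose_mat V)) (vecm S * \<sigma>)"
proof -
  have c: "kron (1\<^sub>m r) U \<in> carrier_mat (n*r) (r*r)" "kron V (1\<^sub>m r) \<in> carrier_mat (m*r) (r*r)"
    "vecm S \<in> carrier_mat (r*r) 1"
    using U V S by (auto simp: mult.commute)
  have h: "vecm H1 \<in> carrier_mat (r*r) 1" "vecm H2 \<in> carrier_mat (r*r) 1"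
    using H by auto
  have "gauge_mat n m r U V S * stack3 (vecm H1) (vecm H2) \<sigma>
      = stack3 (kron (1\<^sub>m r) U * vecm H1) (kron V (1\<^sub>m r) * vecm H2) (vecm S * \<sigma>)"
    unfolding gauge_mat_def
    using c h H(3) by (subst block3_mult_stack3[OF c(1) _ _ _ c(2) _ _ _ c(3) h H(3)])
      (auto simp: left_mult_zero_mat[OF h(1)] left_mult_zero_mat[OF h(2)] left_mult_zero_mat[OF H(3)])
  also have "\<dots> = stack3 (vecm (U * H1)) (vecm (H2 * transpose_mat V)) (vecm S * \<sigma>)"
    using kron_one_left_mult_vecm[OF U H(1)] kron_one_right_mult_vecm[of H2 r r "transpose_mat V" m]
      V H by simp
  finally show ?thesis .
qed

section \<open>Vanishing of the normal component\<close>

lemma gauge_mat_mult_transpose_local_coords: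
  assumes U: "U \<in> carrier_mat n r" and V: "V \<in> carrier_mat m r" and S: "S \<in> carrier_mat r r"
    and W: "W \<in> carrier_mat n m"
  defines "B \<equiv> gauge_mat n m r U V S"
    and "s \<equiv> (transpose_mat (vecm S) * vecm (transpose_mat U * W * V)) $$ (0,0)"
  shows "B * (transpose_mat B * local_coords n m U V (vecm W))
       = stack3 (vecm (U * (transpose_mat U * W * V))) (vecm (transpose_mat U * W * V * transpose_mat V))
           (vecm (s \<cdot>\<^sub>m S))"
proof -
  define \<sigma> where "\<sigma> = transpose_mat (vecm S) * vecm (transpose_mat U * W * V)"
  have \<sigma>: "\<sigma> \<in> carrier_mat 1 1" unfolding \<sigma>_def by auto
  have G: "W * V \<in> carrier_mat n r" "transpose_mat U * W \<in> carrier_mat r m"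
    "transpose_mat U * W * V \<in> carrier_mat r r"
    using U V W by auto
  have "B * (transpose_mat B * local_coords n m U V (vecm W))
      = B * stack3 (vecm (transpose_mat U * (W * V))) (vecm (transpose_mat U * W * V)) \<sigma>"
    unfolding local_coords_vecm[OF U V W] B_def transpose_gauge_mat_mult[OF U V S G] \<sigma>_def ..
  also have "\<dots> = stack3 (vecm (U * (transpose_mat U * (W * V))))
      (vecm (transpose_mat U * W * V * transpose_mat V)) (vecm S * \<sigma>)"
    unfolding B_def using U V W by (intro gauge_mat_mult[OF U V S _ _ \<sigma>]) auto
  also have "vecm S * \<sigma> = vecm (s \<cdot>\<^sub>m S)"
    unfolding s_def \<sigma>_def[symmetric] vecm_smult by (rule mult_mat_1x1[OF _ \<sigma>]) auto
  also have "U * (transpose_mat U * (W * V)) = U * (transpose_mat U * W * V)"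
    using U V W by (simp add: mult_assoc_dims)
  finally show ?thesis .
qed

lemma compl_gauge_mult_local_coords_eq_0_iff:
  assumes U: "U \<in> carrier_mat n r" and V: "V \<in> carrier_mat m r" and S: "S \<in> carrier_mat r r"
    and W: "W \<in> carrier_mat n m"
  defines "B \<equiv> gauge_mat n m r U V S"
    and "s \<equiv> (transpose_mat (vecm S) * vecm (transpose_mat U * W * V)) $$ (0,0)"
  shows "(1\<^sub>m (n*r + m*r + r*r) - B * transpose_mat B) * local_coords n m U V (vecm W)
           = 0\<^sub>m (n*r + m*r + r*r) 1
     \<longleftrightarrow> W * V = U * (transpose_mat U * W * V)
       \<and> transpose_mat U * W = transpose_mat U * W * V * transpose_mat V
       \<and> transpose_mat U * W * V = s \<cdot>\<^sub>m S"
proof -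
  have G: "W * V \<in> carrier_mat n r" "transpose_mat U * W \<in> carrier_mat r m"
    "transpose_mat U * W * V \<in> carrier_mat r r"
    and X: "U * (transpose_mat U * W * V) \<in> carrier_mat n r"
    "transpose_mat U * W * V * transpose_mat V \<in> carrier_mat r m" "s \<cdot>\<^sub>m S \<in> carrier_mat r r"
    using U V S W by auto
  have g: "vecm (W * V) \<in> carrier_mat (n*r) 1" "vecm (transpose_mat U * W) \<in> carrier_mat (m*r) 1"
    "vecm (transpose_mat U * W * V) \<in> carrier_mat (r*r) 1"
    and x: "vecm (U * (transpose_mat U * W * V)) \<in> carrier_mat (n*r) 1"
    "vecm (transpose_mat U * W * V * transpose_mat V) \<in> carrier_mat (m*r) 1"
    "vecm (s \<cdot>\<^sub>m S) \<in> carrier_mat (r*r) 1"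
    using vecm_carrier_mat[OF G(1)] vecm_carrier_mat[OF G(2)] vecm_carrier_mat[OF G(3)]
      vecm_carrier_mat[OF X(1)] vecm_carrier_mat[OF X(2)] vecm_carrier_mat[OF X(3)]
    by (simp_all add: mult.commute[of r m])
  have "(1\<^sub>m (n*r + m*r + r*r) - B * transpose_mat B) * local_coords n m U V (vecm W)
      = local_coords n m U V (vecm W) - B * (transpose_mat B * local_coords n m U V (vecm W))"
    unfolding B_def
    by (rule one_minus_outer_mult[OF gauge_mat_carrier[OF U V S] local_coords_carrier[OF U V vecm_carrier_mat[OF W]]])
  also have "\<dots> = stack3 (vecm (W * V) - vecm (U * (transpose_mat U * W * V)))
          (vecm (transpose_mat U * W) - vecm (transpose_mat U * W * V * transpose_mat V))
          (vecm (transpose_mat U * W * V) - vecm (s \<cdot>\<^sub>m S))"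
    unfolding B_def gauge_mat_mult_transpose_local_coords[OF U V S W, folded s_def]
    unfolding local_coords_vecm[OF U V W] by (rule stack3_minus[OF g x])
  finally have eq: "(1\<^sub>m (n*r + m*r + r*r) - B * transpose_mat B) * local_coords n m U V (vecm W) = \<dots>" .
  show ?thesis
    unfolding eq stack3_eq_0_iff[OF minus_carrier_mat[OF x(1)] minus_carrier_mat[OF x(2)]
        minus_carrier_mat[OF x(3)]]
    using vecm_minus_eq_0_iff[OF G(1) X(1)] vecm_minus_eq_0_iff[OF G(2) X(2)] vecm_minus_eq_0_iff[OF G(3) X(3)]
    by (simp add: mult.commute[of r m])
qed

lemma compl_outer_mult_tangent_proj_eq_0_iff:
  assumes U: "U \<in> carrier_mat n r" and V: "V \<in> carrier_mat m r" and S: "S \<in> carrier_mat r r"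
    and UU: "transpose_mat U * U = 1\<^sub>m r" and VV: "transpose_mat V * V = 1\<^sub>m r"
    and W: "W \<in> carrier_mat n m"
  defines "x \<equiv> vecm (U * S * transpose_mat V)"
    and "s \<equiv> (transpose_mat (vecm S) * vecm (transpose_mat U * W * V)) $$ (0,0)"
  shows "(1\<^sub>m (n*m) - x * transpose_mat x) * (tangent_proj n m U V * vecm W) = 0\<^sub>m (n*m) 1
     \<longleftrightarrow> W * V = U * (transpose_mat U * W * V)
       \<and> transpose_mat U * W = transpose_mat U * W * V * transpose_mat V
       \<and> transpose_mat U * W * V = s \<cdot>\<^sub>m S"
proof -
  define X where "X = U * S * transpose_mat V"
  define Z where "Z = tangent_proj_mat n m U V W"
  define \<sigma> where "\<sigma> = transpose_mat (vecm S) * vecm (transpose_mat U * W * V)"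
  have Xc: "X \<in> carrier_mat n m" and Zc: "Z \<in> carrier_mat n m"
    unfolding X_def Z_def using U V S W tangent_proj_mat_carrier by auto
  have xc: "x \<in> carrier_mat (n*m) 1" and \<sigma>: "\<sigma> \<in> carrier_mat 1 1"
    unfolding x_def \<sigma>_def using vecm_carrier_mat[OF Xc[unfolded X_def]] by auto
  have "transpose_mat x * vecm Z = transpose_mat (vecm S) * vecm (transpose_mat U * Z * V)"
    unfolding x_def by (rule vecm_inner_sandwich[OF U V S Zc])
  also have "transpose_mat U * Z * V = transpose_mat U * W * V"
    unfolding Z_def transpose_mult_tangent_proj_mat[OF U V UU VV W] ..
  finally have "transpose_mat x * vecm Z = \<sigma>" unfolding \<sigma>_def .
  then have "(1\<^sub>m (n*m) - x * transpose_mat x) * vecm Z = vecm Z - x * \<sigma>"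
    using one_minus_outer_mult[OF xc vecm_carrier_mat[OF Zc]] by simp
  also have "x * \<sigma> = vecm (s \<cdot>\<^sub>m X)"
    unfolding s_def \<sigma>_def[symmetric] vecm_smult x_def X_def by (rule mult_mat_1x1[OF _ \<sigma>]) auto
  also have "vecm Z - vecm (s \<cdot>\<^sub>m X) = vecm (Z - s \<cdot>\<^sub>m X)"
    using Zc Xc by (simp add: vecm_minus[of _ n m])
  finally have eq: "(1\<^sub>m (n*m) - x * transpose_mat x) * (tangent_proj n m U V * vecm W)
      = vecm (Z - s \<cdot>\<^sub>m X)"
    unfolding Z_def tangent_proj_mult_vecm[OF U V W] .
  have "Z - s \<cdot>\<^sub>m X \<in> carrier_mat n m" "s \<cdot>\<^sub>m X \<in> carrier_mat n m" using Zc Xc by auto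
  with Zc have "(1\<^sub>m (n*m) - x * transpose_mat x) * (tangent_proj n m U V * vecm W) = 0\<^sub>m (n*m) 1
      \<longleftrightarrow> Z = s \<cdot>\<^sub>m X"
    unfolding eq by (simp only: vecm_eq_0_iff minus_mat_eq_0_iff)
  then show ?thesis
    unfolding Z_def X_def using tangent_proj_mat_eq_smult_iff[OF U V UU VV W S] by simp
qed

lemma tangent_normal_eq_0_iff_local_normal_eq_0:
  assumes U: "U \<in> carrier_mat n r" and V: "V \<in> carrier_mat m r" and S: "S \<in> carrier_mat r r"
    and UU: "transpose_mat U * U = 1\<^sub>m r" and VV: "transpose_mat V * V = 1\<^sub>m r"
    and w: "w \<in> carrier_mat (n*m) 1"
  defines "x \<equiv> vecm (U * S * transpose_mat V)" and "B \<equiv> gauge_mat n m r U V S"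
  shows "(1\<^sub>m (n*m) - x * transpose_mat x) * (tangent_proj n m U V * w) = 0\<^sub>m (n*m) 1
     \<longleftrightarrow> (1\<^sub>m (n*r + m*r + r*r) - B * transpose_mat B) * local_coords n m U V w
           = 0\<^sub>m (n*r + m*r + r*r) 1"
proof -
  obtain W where W: "W \<in> carrier_mat n m" and "vecm W = w"
    using vecm_surj[OF w] .
  then show ?thesis
    unfolding x_def B_def
    using compl_outer_mult_tangent_proj_eq_0_iff[OF U V S UU VV W]
      compl_gauge_mult_local_coords_eq_0_iff[OF U V S W] by simp
qed

section \<open>The first-order equations\<close>

lemma transpose_gauge_mat_mult_eq_0_iff:
  assumes U: "U \<in> carrier_mat n r" and V: "V \<in> carrier_mat m r" and S: "S \<in> carrier_mat r r"
    and Ux: "U\<^sub>\<xi> \<in> carrier_mat n r" and Vx: "V\<^sub>\<xi> \<in> carrier_mat m r" and Sx: "S\<^sub>\<xi> \<in> carrier_mat r r"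
  shows "transpose_mat (gauge_mat n m r U V S) * stack3 (vecm U\<^sub>\<xi>) (vecm (transpose_mat V\<^sub>\<xi>)) (vecm S\<^sub>\<xi>)
           = 0\<^sub>m (2*(r*r) + 1) 1
     \<longleftrightarrow> transpose_mat U * U\<^sub>\<xi> = 0\<^sub>m r r \<and> transpose_mat V * V\<^sub>\<xi> = 0\<^sub>m r r
       \<and> transpose_mat (vecm S\<^sub>\<xi>) * vecm S = 0\<^sub>m 1 1"
proof -
  have G: "transpose_mat U * U\<^sub>\<xi> \<in> carrier_mat r r" "transpose_mat V\<^sub>\<xi> * V \<in> carrier_mat r r"
    "transpose_mat (vecm S) * vecm S\<^sub>\<xi> \<in> carrier_mat 1 1"
    using U V Ux Vx by auto
  have "transpose_mat (gauge_mat n m r U V S) * stack3 (vecm U\<^sub>\<xi>) (vecm (transpose_mat V\<^sub>\<xi>)) (vecm S\<^sub>\<xi>)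
           = 0\<^sub>m (2*(r*r) + 1) 1
     \<longleftrightarrow> vecm (transpose_mat U * U\<^sub>\<xi>) = 0\<^sub>m (r*r) 1 \<and> vecm (transpose_mat V\<^sub>\<xi> * V) = 0\<^sub>m (r*r) 1
       \<and> transpose_mat (vecm S) * vecm S\<^sub>\<xi> = 0\<^sub>m 1 1"
    using stack3_eq_0_iff[OF vecm_carrier_mat[OF G(1)] vecm_carrier_mat[OF G(2)] G(3)]
      transpose_gauge_mat_mult[OF U V S Ux _ Sx, of "transpose_mat V\<^sub>\<xi>"] Vx by (simp add: mult_2)
  also have "\<dots> \<longleftrightarrow> transpose_mat U * U\<^sub>\<xi> = 0\<^sub>m r r \<and> transpose_mat V * V\<^sub>\<xi> = 0\<^sub>m r r
       \<and> transpose_mat (vecm S\<^sub>\<xi>) * vecm S = 0\<^sub>m 1 1"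
  proof -
    have "transpose_mat (transpose_mat V\<^sub>\<xi> * V) = transpose_mat V * V\<^sub>\<xi>"
      using transpose_mult[of "transpose_mat V\<^sub>\<xi>" r m V r] V Vx by simp
    moreover have "transpose_mat (transpose_mat (vecm S) * vecm S\<^sub>\<xi>) = transpose_mat (vecm S\<^sub>\<xi>) * vecm S"
      using transpose_mult[of "transpose_mat (vecm S)" 1 "r*r" "vecm S\<^sub>\<xi>" 1]
        vecm_carrier_mat[OF S] vecm_carrier_mat[OF Sx] by simp
    ultimately show ?thesis
      using vecm_eq_0_iff[OF G(1)] vecm_eq_0_iff[OF G(2)] transpose_mat_eq_0_iff[OF G(2)]
        transpose_mat_eq_0_iff[OF G(3)] by simp
  qed
  finally show ?thesis .
qed

lemma compl_gauge_mult_tangent_coords: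
  assumes U: "U \<in> carrier_mat n r" and V: "V \<in> carrier_mat m r" and S: "S \<in> carrier_mat r r"
    and Ux: "U\<^sub>\<xi> \<in> carrier_mat n r" and Vx: "V\<^sub>\<xi> \<in> carrier_mat m r" and Sx: "S\<^sub>\<xi> \<in> carrier_mat r r"
    and gauge: "transpose_mat U * U\<^sub>\<xi> = 0\<^sub>m r r" "transpose_mat V * V\<^sub>\<xi> = 0\<^sub>m r r"
      "transpose_mat (vecm S\<^sub>\<xi>) * vecm S = 0\<^sub>m 1 1"
  defines "B \<equiv> gauge_mat n m r U V S"
    and "\<tau> \<equiv> stack3 (vecm U\<^sub>\<xi>) (vecm (transpose_mat V\<^sub>\<xi>)) (vecm S\<^sub>\<xi>)"
  shows "(1\<^sub>m (n*r + m*r + r*r) - B * transpose_mat B) * \<tau> = \<tau>"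
proof -
  have \<tau>: "\<tau> \<in> carrier_mat (n*r + m*r + r*r) 1"
    unfolding \<tau>_def using stack3_carrier[OF tangent_coords_carrier[OF Ux Vx Sx]] .
  have "transpose_mat B * \<tau> = 0\<^sub>m (r*r + r*r + 1) 1"
    unfolding \<tau>_def B_def using transpose_gauge_mat_mult_eq_0_iff[OF U V S Ux Vx Sx] gauge
    by (simp add: mult_2)
  then show ?thesis
    unfolding one_minus_outer_mult[OF gauge_mat_carrier[OF U V S, folded B_def] \<tau>]
    using right_mult_zero_mat[OF gauge_mat_carrier[OF U V S, folded B_def]] \<tau> by simp
qed

lemma gauged_tangent_vecm_fixed:
  assumes U: "U \<in> carrier_mat n r" and V: "V \<in> carrier_mat m r" and S: "S \<in> carrier_mat r r"
    and UU: "transpose_mat U * U = 1\<^sub>m r" and VV: "transpose_mat V * V = 1\<^sub>m r"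
    and Ux: "U\<^sub>\<xi> \<in> carrier_mat n r" and Vx: "V\<^sub>\<xi> \<in> carrier_mat m r" and Sx: "S\<^sub>\<xi> \<in> carrier_mat r r"
    and gauge: "transpose_mat U * U\<^sub>\<xi> = 0\<^sub>m r r" "transpose_mat V * V\<^sub>\<xi> = 0\<^sub>m r r"
      "transpose_mat (vecm S\<^sub>\<xi>) * vecm S = 0\<^sub>m 1 1"
  defines "x \<equiv> vecm (U * S * transpose_mat V)"
    and "\<xi> \<equiv> vecm (U\<^sub>\<xi> * transpose_mat V + U * transpose_mat V\<^sub>\<xi> + U * S\<^sub>\<xi> * transpose_mat V)"
  shows "tangent_proj n m U V * \<xi> = \<xi>" and "(1\<^sub>m (n*m) - x * transpose_mat x) * \<xi> = \<xi>"
proof -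
  interpret U: orthonormal_cols U n r using U UU by unfold_locales
  interpret V: orthonormal_cols V m r using V VV by unfold_locales
  define Y where "Y = U\<^sub>\<xi> * transpose_mat V + U * transpose_mat V\<^sub>\<xi> + U * S\<^sub>\<xi> * transpose_mat V"
  have [simp]: "dim_row U\<^sub>\<xi> = n" "dim_col U\<^sub>\<xi> = r" "dim_row V\<^sub>\<xi> = m" "dim_col V\<^sub>\<xi> = r"
    "dim_row S\<^sub>\<xi> = r" "dim_col S\<^sub>\<xi> = r"
    using Ux Vx Sx by auto
  have Y: "Y \<in> carrier_mat n m" unfolding Y_def by auto
  have X: "U * S * transpose_mat V \<in> carrier_mat n m" using S by auto
  show "tangent_proj n m U V * \<xi> = \<xi>"
    unfolding \<xi>_def Y_def[symmetric]
    by (rule tangent_proj_mult_vecm_id[OF U V Y]) (simp add: Y_def mult_dims_simps)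
  have "transpose_mat V\<^sub>\<xi> * V = transpose_mat (transpose_mat V * V\<^sub>\<xi>)"
    using transpose_mult[of "transpose_mat V" r m V\<^sub>\<xi> r] V Vx by simp
  then have "transpose_mat U * Y * V = S\<^sub>\<xi>"
    using gauge(1,2) by (simp add: Y_def mult_dims_simps)
  then have "transpose_mat x * \<xi> = transpose_mat (vecm S) * vecm S\<^sub>\<xi>"
    unfolding x_def \<xi>_def Y_def[symmetric] using vecm_inner_sandwich[OF U V S Y] by simp
  also have "\<dots> = 0\<^sub>m 1 1"
    using arg_cong[OF gauge(3), of transpose_mat]
      transpose_mult[of "transpose_mat (vecm S\<^sub>\<xi>)" 1 "r*r" "vecm S" 1]
      vecm_carrier_mat[OF S] vecm_carrier_mat[OF Sx] by simp
  finally show "(1\<^sub>m (n*m) - x * transpose_mat x) * \<xi> = \<xi>"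
    unfolding \<xi>_def Y_def[symmetric] x_def
    using one_minus_outer_mult[OF vecm_carrier_mat[OF X] vecm_carrier_mat[OF Y]] Y by simp
qed

lemma first_order_equation_iff:
  assumes U: "U \<in> carrier_mat n r" and V: "V \<in> carrier_mat m r" and S: "S \<in> carrier_mat r r"
    and UU: "transpose_mat U * U = 1\<^sub>m r" and VV: "transpose_mat V * V = 1\<^sub>m r"
    and A: "A \<in> carrier_mat (n*m) (n*m)" and C: "C \<in> carrier_mat (n*m) (n*m)"
    and Ux: "U\<^sub>\<xi> \<in> carrier_mat n r" and Vx: "V\<^sub>\<xi> \<in> carrier_mat m r" and Sx: "S\<^sub>\<xi> \<in> carrier_mat r r"
    and gauge: "transpose_mat U * U\<^sub>\<xi> = 0\<^sub>m r r" "transpose_mat V * V\<^sub>\<xi> = 0\<^sub>m r r"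
      "transpose_mat (vecm S\<^sub>\<xi>) * vecm S = 0\<^sub>m 1 1"
  defines "x \<equiv> vecm (U * S * transpose_mat V)" and "P \<equiv> tangent_proj n m U V"
    and "Q \<equiv> 1\<^sub>m (n*m) - vecm (U * S * transpose_mat V) * transpose_mat (vecm (U * S * transpose_mat V))"
    and "\<xi> \<equiv> vecm (U\<^sub>\<xi> * transpose_mat V + U * transpose_mat V\<^sub>\<xi> + U * S\<^sub>\<xi> * transpose_mat V)"
    and "\<tau> \<equiv> stack3 (vecm U\<^sub>\<xi>) (vecm (transpose_mat V\<^sub>\<xi>)) (vecm S\<^sub>\<xi>)"
    and "Pb \<equiv> 1\<^sub>m (n*r + m*r + r*r) - gauge_mat n m r U V S * transpose_mat (gauge_mat n m r U V S)"
  shows "Q * P * C * P * Q * \<xi> = - (P * Q * A * x)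
     \<longleftrightarrow> Pb * local_mat n m U V C * Pb * \<tau> = - (Pb * local_coords n m U V (A * x))"
proof -
  have xc: "x \<in> carrier_mat (n*m) 1" and \<xi>c: "\<xi> \<in> carrier_mat (n*m) 1"
    and \<tau>c: "\<tau> \<in> carrier_mat (n*r + m*r + r*r) 1"
    unfolding x_def \<xi>_def \<tau>_def using U V S Ux Vx Sx stack3_carrier[OF tangent_coords_carrier[OF Ux Vx Sx]]
    by (auto simp: mult.commute)
  have Pc: "P \<in> carrier_mat (n*m) (n*m)" and Qc: "Q \<in> carrier_mat (n*m) (n*m)"
    and Pbc: "Pb \<in> carrier_mat (n*r + m*r + r*r) (n*r + m*r + r*r)"
    unfolding P_def Q_def Pb_def tangent_proj_def
    using xc[unfolded x_def] gauge_mat_carrier[OF U V S] U V by (auto simp: mult.commute)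
  have Axc: "A * x \<in> carrier_mat (n*m) 1" using A xc by auto
  note fixed = gauged_tangent_vecm_fixed[OF U V S UU VV Ux Vx Sx gauge, folded x_def P_def \<xi>_def]
  have comm: "P * (Q * (A * x)) = Q * (P * (A * x))"
    unfolding Q_def x_def[symmetric] P_def
    using proj_commute_compl_outer[OF Pc[unfolded P_def] transpose_tangent_proj[OF U V] xc
        tangent_proj_mult_point[OF U V S UU VV, folded x_def] Axc] .
  have "Q * P * C * P * Q * \<xi> = - (P * Q * A * x) \<longleftrightarrow> Q * (P * (C * \<xi> + A * x)) = 0\<^sub>m (n*m) 1"
    using sandwich_eq_uminus_iff[OF Pc Qc C A \<xi>c fixed(1) _ xc comm] fixed(2) unfolding Q_def x_def .
  also have "\<dots> \<longleftrightarrow> Pb * local_coords n m U V (C * \<xi> + A * x) = 0\<^sub>m (n*r + m*r + r*r) 1"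
    unfolding Q_def P_def Pb_def
    by (rule tangent_normal_eq_0_iff_local_normal_eq_0[OF U V S UU VV]) (use C \<xi>c Axc in auto)
  also have "local_coords n m U V (C * \<xi> + A * x) = local_mat n m U V C * \<tau> + local_coords n m U V (A * x)"
    unfolding \<xi>_def \<tau>_def by (rule local_coords_tangent_add[OF U V C Ux Vx Sx Axc])
  also have "Pb * \<dots> = 0\<^sub>m (n*r + m*r + r*r) 1
      \<longleftrightarrow> Pb * local_mat n m U V C * Pb * \<tau> = - (Pb * local_coords n m U V (A * x))"
    using proj_sandwich_eq_uminus_iff[OF Pbc local_mat_carrier[OF U V C] \<tau>c local_coords_carrier[OF U V Axc]]
      compl_gauge_mult_tangent_coords[OF U V S Ux Vx Sx gauge] unfolding Pb_def \<tau>_def by simp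
  finally show ?thesis .
qed

theorem proposition2:
  fixes n m r :: nat and A U S V U\<^sub>\<xi> V\<^sub>\<xi> S\<^sub>\<xi> :: "real mat"
  assumes A: "A \<in> carrier_mat (n*m) (n*m)"
    and U: "U \<in> carrier_mat n r" and V: "V \<in> carrier_mat m r" and S: "S \<in> carrier_mat r r"
    and UU: "transpose_mat U * U = 1\<^sub>m r" and VV: "transpose_mat V * V = 1\<^sub>m r"
    and Sdiag: "diagonal_mat S" and Spos: "\<forall>i<r. S $$ (i,i) > 0"
    and norm1: "transpose_mat (vecm (U * S * transpose_mat V)) * vecm (U * S * transpose_mat V) = 1\<^sub>m 1"
    and Ux: "U\<^sub>\<xi> \<in> carrier_mat n r" and Vx: "V\<^sub>\<xi> \<in> carrier_mat m r" and Sx: "S\<^sub>\<xi> \<in> carrier_mat r r"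
  shows
    "let X = U * S * transpose_mat V;
         x = vecm X;
         N = n * m;
         Rx = (transpose_mat x * A * x) $$ (0,0);
         C = A - Rx \<cdot>\<^sub>m 1\<^sub>m N;
         P = tangent_proj n m U V;
         Q = 1\<^sub>m N - x * transpose_mat x;
         \<xi> = vecm (U\<^sub>\<xi> * transpose_mat V + U * transpose_mat V\<^sub>\<xi> + U * S\<^sub>\<xi> * transpose_mat V);
         \<tau> = stack3 (vecm U\<^sub>\<xi>) (vecm (transpose_mat V\<^sub>\<xi>)) (vecm S\<^sub>\<xi>);
         ev = Ev n V; eu = Eu m U; evu = Evu U V;
         B = block3 (kron (1\<^sub>m r) U) (0\<^sub>m (n*r) (r*r)) (0\<^sub>m (n*r) 1)
                    (0\<^sub>m (m*r) (r*r)) (kron V (1\<^sub>m r)) (0\<^sub>m (m*r) 1)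
                    (0\<^sub>m (r*r) (r*r)) (0\<^sub>m (r*r) (r*r)) (vecm S);
         Cloc = block3 (loc_block ev C ev) (loc_block ev C eu) (loc_block ev C evu)
                       (loc_block eu C ev) (loc_block eu C eu) (loc_block eu C evu)
                       (loc_block evu C ev) (loc_block evu C eu) (loc_block evu C evu);
         g = stack3 (loc_block ev A ev * vecm (U * S))
                    (loc_block eu A eu * vecm (S * transpose_mat V))
                    (loc_block evu A evu * vecm S);
         K = n*r + m*r + r*r;
         Pb = 1\<^sub>m K - B * transpose_mat B
     in (transpose_mat U * U\<^sub>\<xi> = 0\<^sub>m r r \<and> transpose_mat V * V\<^sub>\<xi> = 0\<^sub>m r r
         \<and> transpose_mat (vecm S\<^sub>\<xi>) * vecm S = 0\<^sub>m 1 1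
         \<and> Q * P * C * P * Q * \<xi> = - (P * Q * A * x))
      \<longleftrightarrow> (transpose_mat B * \<tau> = 0\<^sub>m (2*(r*r) + 1) 1
         \<and> Pb * Cloc * Pb * \<tau> = - (Pb * g))"
proof -
  let ?x = "vecm (U * S * transpose_mat V)"
  have C: "A - (transpose_mat ?x * A * ?x) $$ (0,0) \<cdot>\<^sub>m 1\<^sub>m (n*m) \<in> carrier_mat (n*m) (n*m)"
    using A by auto
  show ?thesis
    unfolding Let_def gauge_mat_def[symmetric] local_mat_def[symmetric]
      loc_blocks_mult_eq_local_coords[OF U V S A]
    using transpose_gauge_mat_mult_eq_0_iff[OF U V S Ux Vx Sx]
      first_order_equation_iff[OF U V S UU VV A C Ux Vx Sx]
    by blast
qed

end
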